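(* Let $c_1,c_2$ be positive constants and $h:=4(2\sqrt2 c_1+c_2^2)$. Then there exists a constant $\gamma_1>0$ such that, for all sufficiently large $n$, for every $(2n,d,b)$-clustered regular graph $G=(V,E)$, if each node $u\in V$ chooses a color in $\{red,blue\}$ uniformly at random and independently of the others, then $$\Pr\big[s^{(0)}_1\ge h\sqrt n \ \wedge\ -s^{(0)}_2\ge h\sqrt n\big]\ge\gamma_1.$$
   Context: A $(2n,d,b)$-clustered regular graph is a graph $G=(V,E)$ with $V=V_1\cup V_2$ disjoint, $|V_1|=|V_2|=n$, every node of degree $d$, every node of $V_1$ having exactly $b$ neighbors in $V_2$ and vice versa. For $i\in\{1,2\}$, $s^{(0)}_i$ denotes the number of red nodes in $V_i$ minus the number of blue nodes in $V_i$ in the initial coloring. *)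

theory Defs
  imports "HOL-Probability.Probability"
begin

definition clustered_regular ::
  "nat \<Rightarrow> nat \<Rightarrow> nat \<Rightarrow> nat set \<Rightarrow> nat set \<Rightarrow> (nat \<Rightarrow> nat \<Rightarrow> bool) \<Rightarrow> bool" where
  "clustered_regular n d b V1 V2 E \<longleftrightarrow>
     finite V1 \<and> finite V2 \<and> V1 \<inter> V2 = {} \<and> card V1 = n \<and> card V2 = n \<and>
     (\<forall>u v. E u v \<longrightarrow> E v u) \<and> (\<forall>u. \<not> E u u) \<and>
     (\<forall>u v. E u v \<longrightarrow> u \<in> V1 \<union> V2 \<and> v \<in> V1 \<union> V2) \<and>
     (\<forall>u \<in> V1 \<union> V2. card {v \<in> V1 \<union> V2. E u v} = d) \<and>
     (\<forall>u \<in> V1. card {v \<in> V2. E u v} = b) \<and>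
     (\<forall>u \<in> V2. card {v \<in> V1. E u v} = b)"

text \<open>Colorings: True = red, False = blue. s A col = #red in A - #blue in A.\<close>
definition spin_sum :: "nat set \<Rightarrow> (nat \<Rightarrow> bool) \<Rightarrow> int" where
  "spin_sum A col = int (card {u \<in> A. col u}) - int (card {u \<in> A. \<not> col u})"

definition uniform_coloring :: "nat set \<Rightarrow> (nat \<Rightarrow> bool) pmf" where
  "uniform_coloring V = pmf_of_set (V \<rightarrow>\<^sub>E (UNIV :: bool set))"

end

theory Submission
  imports Defs
begin

text \<open>The spin sums of the two clusters are independent, and each is distributed as
  \<open>2X - n\<close> with \<open>X \<sim> Bin(n, 1/2)\<close>; by the red/blue symmetry the event has probability \<open>p\<^sup>2\<close>,
  where \<open>p\<close> is the probability that \<open>2X - n \<ge> h \<surd>n\<close>. To bound \<open>p\<close> from below uniformly in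
  \<open>n\<close>, look at the window \<open>m + T \<le> k < m + 2T\<close> with \<open>m = n div 2\<close> and \<open>T \<approx> h \<surd>n / 2\<close>: there the
  ratio of consecutive binomial coefficients is at least \<open>(m - 2T)/(m + 2T)\<close>, so each coefficient
  is at least \<open>exp(-O(h\<^sup>2))\<close> times the central one, which is at least \<open>4\<^sup>m / (2\<surd>m)\<close>.\<close>

lemma central_binomial_Suc:
  "real (2 * Suc m choose Suc m) * (real m + 1) = real (2 * m choose m) * (2 * (2 * real m + 1))"
proof -
  have Suc: "real (2 * Suc m choose Suc m) = fact (Suc (Suc (2 * m))) / (fact (Suc m) * fact (Suc m))"
    by (subst binomial_fact) (auto simp del: binomial_Suc_Suc)
  have central: "real (2 * m choose m) = fact (2 * m) / (fact m * fact m)"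
    by (subst binomial_fact) (auto simp: mult_2)
  show ?thesis
    unfolding Suc central by (simp add: divide_simps) (simp add: algebra_simps)
qed

lemma central_binomial_squared_lower_bound:
  assumes "m > 0"
  shows "16 ^ m \<le> real (2 * m choose m) ^ 2 * (4 * real m)"
  using assms
proof (induction m rule: nat_induct_non_zero)
  case 1
  then show ?case by (simp add: numeral_2_eq_2)
next
  case (Suc m)
  define C where "C = real (2 * m choose m)"
  define C' where "C' = real (2 * Suc m choose Suc m)"
  have "16 ^ Suc m * (real m + 1) = 16 ^ m * (16 * (real m + 1))"
    by simp
  also have "\<dots> \<le> C ^ 2 * (4 * real m) * (16 * (real m + 1))"
    using Suc.IH unfolding C_def by (intro mult_right_mono) auto
  also have "\<dots> \<le> C ^ 2 * (16 * (2 * real m + 1) ^ 2)"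
  proof -
    have "4 * real m * (16 * (real m + 1)) \<le> 16 * (2 * real m + 1) ^ 2"
      by (simp add: power2_eq_square algebra_simps)
    then show ?thesis
      by (simp add: mult.assoc mult_left_mono)
  qed
  also have "\<dots> = 4 * (C * (2 * (2 * real m + 1))) ^ 2"
    by (simp add: power2_eq_square algebra_simps)
  also have "\<dots> = C' ^ 2 * (4 * (real m + 1)) * (real m + 1)"
    unfolding C_def C'_def central_binomial_Suc[symmetric] by (simp add: power2_eq_square)
  finally have "16 ^ Suc m \<le> C' ^ 2 * (4 * (real m + 1))"
    by (rule mult_right_le_imp_le) simp
  then show ?case
    unfolding C'_def by (simp add: algebra_simps del: binomial_Suc_Suc)
qed

lemma central_binomial_lower_bound_sqrt:
  assumes "m > 0"
  shows "4 ^ m \<le> real (2 * m choose m) * (2 * sqrt m)"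
proof -
  have "((4::real) ^ m) ^ 2 = 16 ^ m"
    by (simp add: power2_eq_square flip: power_mult_distrib)
  also have "\<dots> \<le> real (2 * m choose m) ^ 2 * (4 * real m)"
    using assms by (rule central_binomial_squared_lower_bound)
  also have "\<dots> = (real (2 * m choose m) * (2 * sqrt m)) ^ 2"
    by (simp add: power_mult_distrib)
  finally show ?thesis
    by (rule power2_le_imp_le) simp
qed

lemma binomial_geometric_lower_bound:
  fixes r :: real
  assumes "0 \<le> r" and ratio: "\<And>j. k \<le> j \<Longrightarrow> j < k + t \<Longrightarrow> r * (real j + 1) \<le> real n - real j"
  shows "real (n choose k) * r ^ t \<le> real (n choose (k + t))"
  using ratio
proof (induction t)
  case 0
  then show ?case by simp
next
  case (Suc t)
  have step: "r * (real (k + t) + 1) \<le> real n - real (k + t)"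
    using Suc.prems[of "k + t"] by simp
  moreover have "0 \<le> r * (real (k + t) + 1)"
    using \<open>0 \<le> r\<close> by simp
  ultimately have "k + t \<le> n"
    by linarith
  have "real (n choose k) * r ^ Suc t * (real (k + t) + 1)
      = real (n choose k) * r ^ t * (r * (real (k + t) + 1))"
    by (simp add: algebra_simps)
  also have "\<dots> \<le> real (n choose (k + t)) * (real n - real (k + t))"
    using Suc \<open>0 \<le> r\<close> step by (intro mult_mono) auto
  also have "\<dots> = real (n choose (k + Suc t)) * (real (k + t) + 1)"
  proof -
    have "(n choose Suc (k + t)) * Suc (k + t) = (n choose (k + t)) * (n - (k + t))"
      by (metis binomial_absorb_comp binomial_absorption mult.commute)
    then have "real (n choose Suc (k + t)) * (real (k + t) + 1) = real (n choose (k + t)) * real (n - (k + t))"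
      by (metis add.commute of_nat_Suc of_nat_mult)
    then show ?thesis
      using \<open>k + t \<le> n\<close> by (simp del: of_nat_add)
  qed
  finally show ?case
    by (rule mult_right_le_imp_le) simp
qed

lemma exp_le_one_minus_power:
  fixes x :: real
  assumes "0 \<le> x" "x \<le> 1/2"
  shows "exp (- 2 * real k * x) \<le> (1 - x) ^ k"
proof -
  have "- 2 * x \<le> ln (1 - x)"
  proof -
    have "x * (2 * x) \<le> x * 1"
      using assms by (intro mult_left_mono) auto
    then show ?thesis
      using ln_one_minus_pos_lower_bound[OF assms] by (simp add: power2_eq_square)
  qed
  then have "real k * (- 2 * x) \<le> real k * ln (1 - x)"
    by (intro mult_left_mono) auto
  then have "exp (- 2 * real k * x) \<le> exp (real k * ln (1 - x))"
    by (simp add: mult_ac)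
  also have "\<dots> = (1 - x) ^ k"
    using assms by (simp add: exp_of_nat_mult)
  finally show ?thesis .
qed

lemma binomial_near_centre_lower_bound:
  assumes "6 * T \<le> m" "t \<le> 2 * T"
  shows "real (2 * m choose m) * exp (- 16 * real T ^ 2 / real m) \<le> real (2 * m choose (m + t))"
proof (cases "m = 0")
  case True
  then show ?thesis using assms by simp
next
  case False
  define x where "x = 4 * real T / (real m + 2 * real T)"
  have x: "0 \<le> x" "x \<le> 1/2"
    using assms(1) False by (auto simp: x_def field_simps)
  have ratio: "(1 - x) * (real j + 1) \<le> real (2 * m) - real j" if "m \<le> j" "j < m + t" for j
  proof -
    have "0 \<le> real m * (2 * real m + 4 * real T - 2 * real j - 1)"
      using that assms(2) by simp
    then have "(real m - 2 * real T) * (real j + 1) \<le> (2 * real m - real j) * (real m + 2 * real T)"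
      by (simp add: algebra_simps)
    moreover have "1 - x = (real m - 2 * real T) / (real m + 2 * real T)"
      using False by (simp add: x_def field_simps)
    moreover have "real m + 2 * real T > 0"
      using False by simp
    ultimately show ?thesis
      by (simp add: pos_divide_le_eq mult.commute)
  qed
  have "exp (- 16 * real T ^ 2 / real m) \<le> exp (- 2 * real (2 * T) * x)"
    using False by (simp add: x_def field_simps power2_eq_square)
  also have "\<dots> \<le> (1 - x) ^ (2 * T)"
    using x by (rule exp_le_one_minus_power)
  also have "\<dots> \<le> (1 - x) ^ t"
    using x assms(2) by (intro power_decreasing) auto
  finally have "real (2 * m choose m) * exp (- 16 * real T ^ 2 / real m) \<le> real (2 * m choose m) * (1 - x) ^ t"
    by (intro mult_left_mono) auto
  also have "\<dots> \<le> real (2 * m choose (m + t))"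
    using x ratio by (intro binomial_geometric_lower_bound) auto
  finally show ?thesis .
qed

lemma binomial_upper_tail_window:
  fixes L :: real and n T :: nat
  defines "m \<equiv> n div 2"
  assumes "6 * T \<le> m" "L * sqrt n + 1 \<le> 2 * real T"
  shows "real T * (real (2 * m choose m) * exp (- 16 * real T ^ 2 / real m))
    \<le> (\<Sum>k \<in> {k. L * sqrt n \<le> 2 * real k - real n} \<inter> {..n}. real (n choose k))"
proof -
  have m: "2 * m \<le> n" "real n \<le> 2 * real m + 1"
    unfolding m_def by linarith+
  have window: "{m + T..<m + 2 * T} \<subseteq> {k. L * sqrt n \<le> 2 * real k - real n} \<inter> {..n}"
  proof
    fix k assume "k \<in> {m + T..<m + 2 * T}"
    then have "m + T \<le> k" "k \<le> n"
      using assms(2) m(1) by auto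
    then show "k \<in> {k. L * sqrt n \<le> 2 * real k - real n} \<inter> {..n}"
      using assms(3) m(2) by simp
  qed
  have "real T * (real (2 * m choose m) * exp (- 16 * real T ^ 2 / real m))
      = (\<Sum>k \<in> {m + T..<m + 2 * T}. real (2 * m choose m) * exp (- 16 * real T ^ 2 / real m))"
    by simp
  also have "\<dots> \<le> (\<Sum>k \<in> {m + T..<m + 2 * T}. real (n choose k))"
  proof (rule sum_mono)
    fix k assume k: "k \<in> {m + T..<m + 2 * T}"
    have "real (2 * m choose m) * exp (- 16 * real T ^ 2 / real m) \<le> real (2 * m choose (m + (k - m)))"
      using k assms(2) by (intro binomial_near_centre_lower_bound) auto
    also have "\<dots> \<le> real (n choose k)"
      using k m(1) by (simp add: binomial_right_mono)
    finally show "real (2 * m choose m) * exp (- 16 * real T ^ 2 / real m) \<le> real (n choose k)" .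
  qed
  also have "\<dots> \<le> (\<Sum>k \<in> {k. L * sqrt n \<le> 2 * real k - real n} \<inter> {..n}. real (n choose k))"
    by (rule sum_mono2[OF finite_Int[OF disjI2[OF finite_atMost]] window]) simp
  finally show ?thesis .
qed

lemma tail_window_width:
  fixes L :: real
  assumes "L > 0" "(6 * L + 20) ^ 2 \<le> real n"
  obtains T :: nat where "L * sqrt n + 1 \<le> 2 * real T" "6 * T \<le> n div 2"
    "16 * real T ^ 2 \<le> (24 * L ^ 2 + 72) * real (n div 2)"
proof -
  define m where "m = n div 2"
  define y where "y = (L * sqrt n + 1) / 2"
  define T where "T = nat \<lceil>y\<rceil>"
  have m: "2 * real m \<le> real n" "real n \<le> 2 * real m + 1"
    unfolding m_def by linarith+
  have "0 \<le> y"
    using assms(1) by (simp add: y_def)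
  then have "real T = of_int \<lceil>y\<rceil>"
    unfolding T_def by (intro of_nat_nat) simp
  then have "y \<le> real T" "real T < y + 1"
    using ceiling_correct[of y] by auto
  moreover have "L * sqrt n + 1 = 2 * y"
    by (simp add: y_def)
  ultimately have lower: "L * sqrt n + 1 \<le> 2 * real T" and upper: "2 * real T \<le> L * sqrt n + 3"
    by linarith+
  have sqrt_n: "6 * L + 20 \<le> sqrt n"
    using assms real_le_rsqrt by simp
  then have "(6 * L + 20) * 20 \<le> (6 * L + 20) * sqrt n" "(6 * L + 20) * sqrt n \<le> sqrt n * sqrt n"
    using assms(1) by (intro mult_left_mono mult_right_mono; simp)+
  then have "6 * L * sqrt n + 400 \<le> real n"
    using assms(1) sqrt_n by (simp add: algebra_simps)
  then have "6 * T \<le> m" "m > 0"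
    using m lower upper \<open>0 \<le> y\<close> \<open>L * sqrt n + 1 = 2 * y\<close> by linarith+
  have "16 * real T ^ 2 \<le> 4 * (L * sqrt n + 3) ^ 2"
    using upper power_mono[of "2 * real T" "L * sqrt n + 3" 2] by (simp add: power_mult_distrib)
  also have "\<dots> \<le> 8 * L ^ 2 * real n + 72"
  proof -
    have "4 * (a + 3) ^ 2 \<le> 8 * a ^ 2 + 72" for a :: real
      using zero_le_power2[of "a - 3"] by (simp add: power2_eq_square algebra_simps)
    from this[of "L * sqrt n"] show ?thesis
      by (simp add: power_mult_distrib)
  qed
  also have "\<dots> \<le> (24 * L ^ 2 + 72) * real m"
    using m \<open>m > 0\<close> mult_left_mono[of "real n" "3 * real m" "8 * L ^ 2"] by (simp add: algebra_simps)
  finally show thesis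
    using that lower \<open>6 * T \<le> m\<close> unfolding m_def by blast
qed

lemma binomial_upper_tail_sum_lower_bound:
  fixes L :: real
  assumes "L > 0" "(6 * L + 20) ^ 2 \<le> real n"
  shows "L * exp (- (24 * L ^ 2 + 72)) / 8 * 2 ^ n
    \<le> (\<Sum>k \<in> {k. L * sqrt n \<le> 2 * real k - real n} \<inter> {..n}. real (n choose k))"
proof -
  define m where "m = n div 2"
  obtain T where T_lower: "L * sqrt n + 1 \<le> 2 * real T" and "6 * T \<le> m"
    and T_squared: "16 * real T ^ 2 \<le> (24 * L ^ 2 + 72) * real m"
    using tail_window_width[OF assms] unfolding m_def .
  have m: "2 * real m \<le> real n" "real n \<le> 2 * real m + 1"
    unfolding m_def by linarith+
  have "0 \<le> L * sqrt n"
    using assms(1) by simp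
  then have "m > 0"
    using \<open>6 * T \<le> m\<close> T_lower by linarith
  then have exponent: "- (24 * L ^ 2 + 72) \<le> - 16 * real T ^ 2 / real m"
    using T_squared by (simp add: field_simps)
  have "L * sqrt m \<le> 2 * real T"
  proof -
    have "sqrt m \<le> sqrt n"
      using m by simp
    then have "L * sqrt m \<le> L * sqrt n"
      using assms(1) by simp
    then show ?thesis
      using T_lower by linarith
  qed
  have central: "L * 4 ^ m \<le> 4 * (real T * real (2 * m choose m))"
  proof -
    have "L * 4 ^ m \<le> L * (real (2 * m choose m) * (2 * sqrt m))"
      using central_binomial_lower_bound_sqrt[OF \<open>m > 0\<close>] assms(1) by simp
    also have "\<dots> = 2 * real (2 * m choose m) * (L * sqrt m)"
      by (simp add: algebra_simps)
    also have "\<dots> \<le> 2 * real (2 * m choose m) * (2 * real T)"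
      using \<open>L * sqrt m \<le> 2 * real T\<close> by (intro mult_left_mono) auto
    finally show ?thesis
      by (simp add: algebra_simps)
  qed
  have "(2::real) ^ n \<le> 2 ^ (2 * m + 1)"
    using m by (intro power_increasing) auto
  then have "L * exp (- (24 * L ^ 2 + 72)) / 8 * 2 ^ n \<le> exp (- (24 * L ^ 2 + 72)) / 4 * (L * 4 ^ m)"
    using assms(1) by (simp add: power_mult mult_left_mono)
  also have "\<dots> \<le> exp (- (24 * L ^ 2 + 72)) / 4 * (4 * (real T * real (2 * m choose m)))"
    using central by (intro mult_left_mono) auto
  also have "\<dots> \<le> exp (- 16 * real T ^ 2 / real m) * (real T * real (2 * m choose m))"
    using exponent by (simp add: mult_right_mono)
  also have "\<dots> = real T * (real (2 * m choose m) * exp (- 16 * real T ^ 2 / real m))"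
    by (simp add: algebra_simps)
  also have "\<dots> \<le> (\<Sum>k \<in> {k. L * sqrt n \<le> 2 * real k - real n} \<inter> {..n}. real (n choose k))"
    using \<open>6 * T \<le> m\<close> T_lower unfolding m_def by (rule binomial_upper_tail_window)
  finally show ?thesis .
qed

lemma prob_binomial_half:
  "measure_pmf.prob (binomial_pmf n (1/2)) A = (\<Sum>k\<in>A \<inter> {..n}. real (n choose k)) / 2 ^ n"
proof -
  have "measure_pmf.prob (binomial_pmf n (1/2)) A = measure_pmf.prob (binomial_pmf n (1/2)) (A \<inter> {..n})"
    using measure_Int_set_pmf[of "binomial_pmf n (1/2)" A] by simp
  also have "\<dots> = (\<Sum>k\<in>A \<inter> {..n}. pmf (binomial_pmf n (1/2)) k)"
    by (simp add: measure_measure_pmf_finite)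
  also have "\<dots> = (\<Sum>k\<in>A \<inter> {..n}. real (n choose k) / 2 ^ n)"
    by (intro sum.cong) (auto simp: power_add[symmetric] power_divide)
  finally show ?thesis by (simp add: sum_divide_distrib)
qed

lemma binomial_half_upper_tail_lower_bound:
  fixes L :: real
  assumes "L > 0"
  shows "\<exists>\<gamma> > 0. \<exists>N. \<forall>n \<ge> N.
    \<gamma> \<le> measure_pmf.prob (binomial_pmf n (1/2)) {k. L * sqrt n \<le> 2 * real k - real n}"
proof (intro exI[of _ "L * exp (- (24 * L ^ 2 + 72)) / 8"] conjI exI[of _ "nat \<lceil>(6 * L + 20) ^ 2\<rceil>"] allI impI)
  show "L * exp (- (24 * L ^ 2 + 72)) / 8 > 0"
    using assms by simp
  fix n assume "nat \<lceil>(6 * L + 20) ^ 2\<rceil> \<le> n"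
  then have "(6 * L + 20) ^ 2 \<le> real n"
    by linarith
  then show "L * exp (- (24 * L ^ 2 + 72)) / 8
      \<le> measure_pmf.prob (binomial_pmf n (1/2)) {k. L * sqrt n \<le> 2 * real k - real n}"
    unfolding prob_binomial_half using binomial_upper_tail_sum_lower_bound[OF assms]
    by (simp add: field_simps)
qed

lemma uniform_coloring_conv_Pi_pmf:
  assumes "finite V"
  shows "uniform_coloring V = Pi_pmf V undefined (\<lambda>_. bernoulli_pmf (1/2))"
proof -
  have "PiE_dflt V undefined (\<lambda>_. UNIV) = V \<rightarrow>\<^sub>E (UNIV :: bool set)"
    by (auto simp: PiE_dflt_def PiE_def extensional_def)
  then show ?thesis
    using assms by (simp add: uniform_coloring_def bernoulli_pmf_half_conv_pmf_of_set Pi_pmf_of_set)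
qed

lemma spin_sum_cong: "(\<And>u. u \<in> V \<Longrightarrow> f u = g u) \<Longrightarrow> spin_sum V f = spin_sum V g"
  unfolding spin_sum_def by (metis (mono_tags, lifting) Collect_cong)

lemma spin_sums_independent:
  assumes "finite V1" "finite V2" "V1 \<inter> V2 = {}"
  shows "map_pmf (\<lambda>c. (spin_sum V1 c, spin_sum V2 c)) (uniform_coloring (V1 \<union> V2)) =
         pair_pmf (map_pmf (spin_sum V1) (uniform_coloring V1)) (map_pmf (spin_sum V2) (uniform_coloring V2))"
proof -
  have merge: "(\<lambda>c. (spin_sum V1 c, spin_sum V2 c)) \<circ> (\<lambda>(f, g) x. if x \<in> V1 then f x else g x)
      = (\<lambda>(f, g). (spin_sum V1 f, spin_sum V2 g))"
    using assms(3) by (auto simp: fun_eq_iff intro!: spin_sum_cong)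
  show ?thesis
    using assms by (simp add: uniform_coloring_conv_Pi_pmf Pi_pmf_union pmf.map_comp merge map_pair)
qed

lemma spin_sum_conv_card: "finite V \<Longrightarrow> spin_sum V c = 2 * int (card {u \<in> V. c u}) - int (card V)"
proof -
  assume "finite V"
  then have "card {u \<in> V. c u} + card {u \<in> V. \<not> c u} = card V"
    by (subst card_Un_disjoint[symmetric]) (auto intro: arg_cong[where f = card])
  then show ?thesis unfolding spin_sum_def by linarith
qed

lemma spin_sum_distribution:
  assumes "finite V"
  shows "map_pmf (spin_sum V) (uniform_coloring V) =
         map_pmf (\<lambda>k. 2 * int k - int (card V)) (binomial_pmf (card V) (1/2))"
proof -
  have "spin_sum V = (\<lambda>c. 2 * int (card {u \<in> V. c u}) - int (card V))"
    using assms by (simp add: fun_eq_iff spin_sum_conv_card)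
  then show ?thesis
    using assms by (simp add: binomial_pmf_altdef'[OF assms refl, of "1/2" undefined]
        uniform_coloring_conv_Pi_pmf pmf.map_comp o_def)
qed

lemma spin_sum_symmetric:
  assumes "finite V"
  shows "map_pmf (\<lambda>c. - spin_sum V c) (uniform_coloring V) = map_pmf (spin_sum V) (uniform_coloring V)"
proof -
  define flip where "flip c = (\<lambda>u\<in>V. \<not> c u)" for c :: "nat \<Rightarrow> bool"
  have "bij_betw flip (V \<rightarrow>\<^sub>E UNIV) (V \<rightarrow>\<^sub>E UNIV)"
    by (rule bij_betwI[where g = flip]) (auto simp: flip_def fun_eq_iff PiE_def extensional_def)
  then have "map_pmf flip (uniform_coloring V) = uniform_coloring V"
    using assms unfolding uniform_coloring_def by (intro map_pmf_of_set_bij_betw) (auto intro: finite_PiE)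
  moreover have "spin_sum V (flip c) = - spin_sum V c" for c
  proof -
    have "spin_sum V (flip c) = spin_sum V (\<lambda>u. \<not> c u)"
      by (rule spin_sum_cong) (simp add: flip_def)
    then show ?thesis
      by (simp add: spin_sum_def)
  qed
  ultimately show ?thesis
    by (metis (no_types, lifting) pmf.map_comp comp_apply pmf.map_cong)
qed

lemma prob_spin_sum_ge:
  assumes "finite V"
  shows "measure_pmf.prob (uniform_coloring V) {c. x \<le> real_of_int (spin_sum V c)}
    = measure_pmf.prob (binomial_pmf (card V) (1/2)) {k. x \<le> 2 * real k - real (card V)}"
proof -
  have "measure_pmf.prob (uniform_coloring V) {c. x \<le> real_of_int (spin_sum V c)}
      = measure_pmf.prob (map_pmf (spin_sum V) (uniform_coloring V)) {s. x \<le> real_of_int s}"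
    by simp
  also have "\<dots> = measure_pmf.prob (binomial_pmf (card V) (1/2)) {k. x \<le> 2 * real k - real (card V)}"
    unfolding spin_sum_distribution[OF assms] by simp
  finally show ?thesis .
qed

lemma prob_opposite_spin_tails:
  assumes "finite V1" "finite V2" "V1 \<inter> V2 = {}" "card V1 = n" "card V2 = n"
  shows "measure_pmf.prob (uniform_coloring (V1 \<union> V2))
      {c. x \<le> real_of_int (spin_sum V1 c) \<and> x \<le> - real_of_int (spin_sum V2 c)}
    = measure_pmf.prob (binomial_pmf n (1/2)) {k. x \<le> 2 * real k - real n} ^ 2"
proof -
  let ?A = "{s :: int. x \<le> real_of_int s}" and ?B = "{s :: int. x \<le> - real_of_int s}"
  have "measure_pmf.prob (uniform_coloring (V1 \<union> V2))
      {c. x \<le> real_of_int (spin_sum V1 c) \<and> x \<le> - real_of_int (spin_sum V2 c)}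
    = measure_pmf.prob (map_pmf (\<lambda>c. (spin_sum V1 c, spin_sum V2 c)) (uniform_coloring (V1 \<union> V2))) (?A \<times> ?B)"
    by (simp add: vimage_def)
  also have "\<dots> = measure_pmf.prob (map_pmf (spin_sum V1) (uniform_coloring V1)) ?A
      * measure_pmf.prob (map_pmf (spin_sum V2) (uniform_coloring V2)) ?B"
    unfolding spin_sums_independent[OF assms(1-3)] by (rule measure_pmf_prob_product) auto
  also have "measure_pmf.prob (map_pmf (spin_sum V2) (uniform_coloring V2)) ?B
      = measure_pmf.prob (map_pmf (\<lambda>c. - spin_sum V2 c) (uniform_coloring V2)) ?A"
    by simp
  also have "\<dots> = measure_pmf.prob (map_pmf (spin_sum V2) (uniform_coloring V2)) ?A"
    by (simp only: spin_sum_symmetric[OF assms(2)])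
  finally show ?thesis
    using assms by (simp add: prob_spin_sum_ge[OF assms(1)] prob_spin_sum_ge[OF assms(2)] power2_eq_square)
qed

theorem lemma1:
  fixes c1 c2 :: real
  assumes "c1 > 0" and "c2 > 0"
  defines "h \<equiv> 4 * (2 * sqrt 2 * c1 + c2 ^ 2)"
  shows "\<exists>\<gamma>1 > 0. \<exists>N. \<forall>n \<ge> N. \<forall>d b V1 V2 E.
           clustered_regular n d b V1 V2 E \<longrightarrow>
           measure_pmf.prob (uniform_coloring (V1 \<union> V2))
             {col. real_of_int (spin_sum V1 col) \<ge> h * sqrt (real n) \<and>
                   - real_of_int (spin_sum V2 col) \<ge> h * sqrt (real n)} \<ge> \<gamma>1"
proof -
  have "h > 0"
    unfolding h_def using assms by (simp add: add_pos_pos)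
  then obtain \<gamma> N where "\<gamma> > 0" and tail:
    "\<And>n. n \<ge> N \<Longrightarrow> \<gamma> \<le> measure_pmf.prob (binomial_pmf n (1/2)) {k. h * sqrt n \<le> 2 * real k - real n}"
    using binomial_half_upper_tail_lower_bound by blast
  show ?thesis
  proof (intro exI[of _ "\<gamma> ^ 2"] conjI exI[of _ N] allI impI)
    show "\<gamma> ^ 2 > 0"
      using \<open>\<gamma> > 0\<close> by simp
    fix n d b V1 V2 E
    assume "N \<le> n" and "clustered_regular n d b V1 V2 E"
    then have "finite V1" "finite V2" "V1 \<inter> V2 = {}" "card V1 = n" "card V2 = n"
      unfolding clustered_regular_def by auto
    then show "\<gamma> ^ 2 \<le> measure_pmf.prob (uniform_coloring (V1 \<union> V2))
             {col. real_of_int (spin_sum V1 col) \<ge> h * sqrt (real n) \<and>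
                   - real_of_int (spin_sum V2 col) \<ge> h * sqrt (real n)}"
      using prob_opposite_spin_tails tail[OF \<open>N \<le> n\<close>] \<open>\<gamma> > 0\<close> by (simp add: power_mono)
  qed
qed

end
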